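(* Let $\mathcal Q=\mathbb R^n$, $\alpha,\beta,\gamma\in[0,1]$, and let $g_s$ be a one-parameter group of transformations acting as in the context. Assume $\tilde L^{\mathcal E}_d$ is invariant: $\tilde L^{\mathcal E}_d(\tilde\Phi_{g_s}(y_k),\tilde\Phi_{g_s}(y_{k+1}),\tilde U_k^{(1)},\tilde U_k^{(2)},h)=\tilde L^{\mathcal E}_d(y_k,y_{k+1},U_k^{(1)},U_k^{(2)},h)$ for all $s$ and all arguments, where $\tilde U_k^{(1)}=\Psi_{g_s}(\bar q_k^\beta)U_k^{(1)}$ and $\tilde U_k^{(2)}=\Psi_{g_s}(\bar q_k^{1-\beta})U_k^{(2)}$. Let $\xi(y)=\frac{d}{ds}\big|_{s=0}\tilde\Phi_{g_s}(y)$ and $I_d(y,p_y)=p_y^\top\xi(y)$. Then along every solution $(y_d,U_d^{(1)},U_d^{(2)})$ of the discrete Euler–Lagrange equations $D_2\tilde L^{\mathcal E}_{d,k-1}+D_1\tilde L^{\mathcal E}_{d,k}=0$ ($k=1,\dots,N-1$) and minimisation conditions $D_{U^{(1)}}\tilde L^{\mathcal E}_{d,k}=D_{U^{(2)}}\tilde L^{\mathcal E}_{d,k}=0$ ($k=0,\dots,N-1$), one has $I_d(y_k,p^-_{y,k})=I_d(y_{k+1},p^+_{y,k+1})$ for all $k$; hence $I_d(y_k,p_{y,k})$, $p_{y,k}=p^-_{y,k}=p^+_{y,k}$, is conserved.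
   Context: Setting: $\mathcal Q=\mathbb R^n$, $y=(q,\lambda)\in T^*\mathcal Q$, controls in $\mathbb R^m$; smooth $f(q,v)$, $\rho(q)\in\mathbb R^{n\times m}$, $\mathrm g(q)$ symmetric positive definite. $\tilde L^{\mathcal E}(q,\lambda,v,v_\lambda,u)=v_\lambda^\top v+\lambda^\top(f(q,v)+\rho(q)u)-\frac12u^\top\mathrm g(q)u$. Notation: $\bar y_k^\gamma=\gamma y_k+(1-\gamma)y_{k+1}$ (similarly $\bar q_k^\gamma$), $\Delta y_k=(y_{k+1}-y_k)/h$. Approximate discrete Lagrangian: $\tilde L^{\mathcal E}_d(y_k,y_{k+1},U^{(1)},U^{(2)},h)=h[\alpha\tilde L^{\mathcal E}(\bar y_k^\gamma,\Delta y_k,U^{(1)})+(1-\alpha)\tilde L^{\mathcal E}(\bar y_k^{1-\gamma},\Delta y_k,U^{(2)})]$, with $U^{(1)},U^{(2)}$ regarded as control values attached to the points $\bar q_k^\beta$, $\bar q_k^{1-\beta}$; $\tilde L^{\mathcal E}_{d,k}$ denotes its value on the $k$-th interval. Discrete momenta: $p^-_{y,k}=-D_1\tilde L^{\mathcal E}_d(y_k,y_{k+1},U_k^{(1)},U_k^{(2)},h)$, $p^+_{y,k+1}=D_2\tilde L^{\mathcal E}_d(y_k,y_{k+1},U_k^{(1)},U_k^{(2)},h)$. Group actions: a Lie group $\mathcal G$ acts on $\mathcal Q$ by $\Phi_g$; cotangent lift $\tilde\Phi_g(q,\lambda)=(\Phi_g(q),(D\Phi_{g^{-1}}(\Phi_g(q)))^\top\lambda)$;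 the action on controls is given by linear maps $\Psi_g(q)$ with $\rho(\Phi_g(q))\Psi_g(q)u=D\Phi_g(q)\rho(q)u$. A one-parameter group of transformations is a smooth additive subgroup $s\mapsto g_s$ with $g_0=e$. *)

theory Defs
  imports "HOL-Analysis.Analysis"
begin

fun iter_deriv :: "'a::real_normed_vector list \<Rightarrow> ('a \<Rightarrow> 'b::real_normed_vector) \<Rightarrow> ('a \<Rightarrow> 'b)" where
  "iter_deriv [] F = F"
| "iter_deriv (v # vs) F = (\<lambda>x. frechet_derivative (iter_deriv vs F) (at x) v)"

definition smooth_map :: "('a::real_normed_vector \<Rightarrow> 'b::real_normed_vector) \<Rightarrow> bool" where
  "smooth_map F \<longleftrightarrow> (\<forall>vs x. iter_deriv vs F differentiable (at x))"

text \<open>Points y = (q, lambda) of the cotangent bundle of R^n.\<close>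
type_synonym 'n cot = "(real^'n) \<times> (real^'n)"

definition LE ::
  "((real^'n) \<times> (real^'n) \<Rightarrow> real^'n) \<Rightarrow> (real^'n \<Rightarrow> real^'m^'n) \<Rightarrow> (real^'n \<Rightarrow> real^'m^'m)
   \<Rightarrow> 'n cot \<Rightarrow> 'n cot \<Rightarrow> real^'m \<Rightarrow> real" where
  "LE f rho g y w u =
     snd w \<bullet> fst w + snd y \<bullet> (f (fst y, fst w) + rho (fst y) *v u) - 1/2 * (u \<bullet> (g (fst y) *v u))"

definition ybar :: "real \<Rightarrow> 'a::real_vector \<Rightarrow> 'a \<Rightarrow> 'a" where
  "ybar c a b = c *\<^sub>R a + (1 - c) *\<^sub>R b"

definition Delta :: "real \<Rightarrow> 'a::real_vector \<Rightarrow> 'a \<Rightarrow> 'a" where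
  "Delta h a b = (1 / h) *\<^sub>R (b - a)"

definition Ld ::
  "((real^'n) \<times> (real^'n) \<Rightarrow> real^'n) \<Rightarrow> (real^'n \<Rightarrow> real^'m^'n) \<Rightarrow> (real^'n \<Rightarrow> real^'m^'m)
   \<Rightarrow> real \<Rightarrow> real \<Rightarrow> 'n cot \<Rightarrow> 'n cot \<Rightarrow> real^'m \<Rightarrow> real^'m \<Rightarrow> real \<Rightarrow> real" where
  "Ld f rho g \<alpha> \<gamma> y0 y1 U1 U2 h =
     h * (\<alpha> * LE f rho g (ybar \<gamma> y0 y1) (Delta h y0 y1) U1
          + (1 - \<alpha>) * LE f rho g (ybar (1 - \<gamma>) y0 y1) (Delta h y0 y1) U2)"

text \<open>Cotangent lift of the one-parameter group  phi s = Phi_{g_s}  (so Phi_{g_s^{-1}} = phi (-s)):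
  (q, lambda) |-> (phi s q, (D phi(-s) (phi s q))' lambda).\<close>
definition cot_lift :: "(real \<Rightarrow> real^'n \<Rightarrow> real^'n) \<Rightarrow> real \<Rightarrow> 'n cot \<Rightarrow> 'n cot" where
  "cot_lift phi s y =
     (phi s (fst y),
      transpose (matrix (frechet_derivative (phi (- s)) (at (phi s (fst y))))) *v snd y)"

definition xi_gen :: "(real \<Rightarrow> real^'n \<Rightarrow> real^'n) \<Rightarrow> 'n cot \<Rightarrow> 'n cot" where
  "xi_gen phi y = vector_derivative (\<lambda>s. cot_lift phi s y) (at 0)"

text \<open>Discrete momenta (covectors, i.e. linear functionals on the tangent space of T*Q).\<close>
definition pminus ::
  "((real^'n) \<times> (real^'n) \<Rightarrow> real^'n) \<Rightarrow> (real^'n \<Rightarrow> real^'m^'n) \<Rightarrow> (real^'n \<Rightarrow> real^'m^'m)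
   \<Rightarrow> real \<Rightarrow> real \<Rightarrow> 'n cot \<Rightarrow> 'n cot \<Rightarrow> real^'m \<Rightarrow> real^'m \<Rightarrow> real \<Rightarrow> ('n cot \<Rightarrow> real)" where
  "pminus f rho g \<alpha> \<gamma> y0 y1 U1 U2 h =
     (\<lambda>v. - frechet_derivative (\<lambda>y. Ld f rho g \<alpha> \<gamma> y y1 U1 U2 h) (at y0) v)"

definition pplus ::
  "((real^'n) \<times> (real^'n) \<Rightarrow> real^'n) \<Rightarrow> (real^'n \<Rightarrow> real^'m^'n) \<Rightarrow> (real^'n \<Rightarrow> real^'m^'m)
   \<Rightarrow> real \<Rightarrow> real \<Rightarrow> 'n cot \<Rightarrow> 'n cot \<Rightarrow> real^'m \<Rightarrow> real^'m \<Rightarrow> real \<Rightarrow> ('n cot \<Rightarrow> real)" where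
  "pplus f rho g \<alpha> \<gamma> y0 y1 U1 U2 h =
     frechet_derivative (\<lambda>y. Ld f rho g \<alpha> \<gamma> y0 y U1 U2 h) (at y1)"

definition Id_noether :: "(real \<Rightarrow> real^'n \<Rightarrow> real^'n) \<Rightarrow> 'n cot \<Rightarrow> ('n cot \<Rightarrow> real) \<Rightarrow> real" where
  "Id_noether phi y p = p (xi_gen phi y)"

end

theory Submission
  imports Defs
begin

text \<open>Differentiating the invariance identity at s = 0 along the orbit of (y_k, y_{k+1}) and of
the controls gives, by the chain rule, D_1 L_d \<cdot> \<xi>(y_k) + D_2 L_d \<cdot> \<xi>(y_{k+1}) plus control terms
equal to 0. The control terms vanish by the minimisation conditions, which is exactly
I_d(y_k, p^-_k) = I_d(y_{k+1}, p^+_{k+1}); the discrete Euler--Lagrange equations say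
p^-_k = p^+_k, so the quantity telescopes.

Since \<Psi>_0 is not assumed to be the identity, the controls U_k must first be written as
\<Psi>_0 V_k. The invariance at s = 0 makes \<Psi>_0 preserve a function of the control whose
second difference is a nonzero multiple of the positive definite form of g, so \<Psi>_0 is injective,
hence onto; where that multiple vanishes the control does not enter L_d at all.\<close>

lemma smooth_map_differentiable:
  assumes "smooth_map F" shows "F differentiable at x"
  using assms[unfolded smooth_map_def, rule_format, of "[]"] by simp

lemma smooth_map_frechet_derivative_differentiable:
  assumes "smooth_map F" shows "(\<lambda>x. frechet_derivative F (at x) v) differentiable at x"
  using assms[unfolded smooth_map_def, rule_format, of "[v]"] by simp

lemma differentiable_curry_orbit:
  assumes "smooth_map (\<lambda>z. F (fst z) (snd z))"
  shows "(\<lambda>s. F s q) differentiable at t"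
  using differentiable_compose[of "\<lambda>z. F (fst z) (snd z)" "\<lambda>s. (s, q)",
      OF smooth_map_differentiable[OF assms]]
  by (simp add: differentiable_Pair differentiable_ident differentiable_const)

lemma differentiable_fst: "F differentiable at x \<Longrightarrow> (\<lambda>x. fst (F x)) differentiable at x"
  by (rule differentiable_compose[OF bounded_linear_imp_differentiable[OF bounded_linear_fst]])

lemma differentiable_snd: "F differentiable at x \<Longrightarrow> (\<lambda>x. snd (F x)) differentiable at x"
  by (rule differentiable_compose[OF bounded_linear_imp_differentiable[OF bounded_linear_snd]])

lemma differentiable_vec_componentwise:
  fixes F :: "'a::real_normed_vector \<Rightarrow> real^'n"
  assumes "\<And>i. (\<lambda>x. F x $ i) differentiable at x"
  shows "F differentiable at x"
  using assms by (auto simp: differentiable_componentwise_within[of F] Basis_vec_def inner_axis)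

lemma vector_matrix_mult_matrix_nth: "(v v* matrix L) $ i = (v::real^'n) \<bullet> L (axis i 1)"
  by (simp add: vector_matrix_mult_def matrix_def inner_vec_def mult.commute)

lemma bounded_bilinear_matrix_vector_mult:
  "bounded_bilinear ((*v) :: real^'m^'n \<Rightarrow> real^'m \<Rightarrow> real^'n)"
  unfolding bilinear_conv_bounded_bilinear[symmetric] bilinear_def
proof (intro allI conjI)
  fix M :: "real^'m^'n" and v :: "real^'m"
  show "linear ((*v) M)" by (rule matrix_vector_mul_linear)
  show "linear (\<lambda>M. M *v v)"
    by (rule linearI) (simp_all add: matrix_vector_mult_add_rdistrib vec_eq_iff
        matrix_vector_mult_def sum_distrib_left sum.distrib distrib_right mult.assoc)
qed

lemma differentiable_matrix_vector_mult:
  fixes M :: "'a::real_normed_vector \<Rightarrow> real^'m^'n"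
  assumes "M differentiable at x" and "u differentiable at x"
  shows "(\<lambda>x. M x *v u x) differentiable at x"
  using assms bounded_bilinear.FDERIV[OF bounded_bilinear_matrix_vector_mult]
  unfolding differentiable_def by blast

lemma differentiable_partial1:
  "F differentiable at (a, b) \<Longrightarrow> (\<lambda>x. F (x, b)) differentiable at a"
  by (rule differentiable_compose) (auto intro: differentiable_Pair)

lemma differentiable_partial2:
  "F differentiable at (a, b) \<Longrightarrow> (\<lambda>x. F (a, x)) differentiable at b"
  by (rule differentiable_compose) (auto intro: differentiable_Pair)

lemma frechet_derivative_Pair_split:
  assumes "F differentiable at (a, b)"
  shows "frechet_derivative F (at (a, b)) (u, v)
       = frechet_derivative (\<lambda>x. F (x, b)) (at a) u + frechet_derivative (\<lambda>x. F (a, x)) (at b) v"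
proof -
  define DF where "DF = frechet_derivative F (at (a, b))"
  have F': "(F has_derivative DF) (at (a, b))"
    unfolding DF_def using assms frechet_derivative_works by blast
  have "((\<lambda>x. (x, b)) has_derivative (\<lambda>u. (u, 0))) (at a)"
    by (intro derivative_eq_intros) auto
  from has_derivative_compose[OF this F']
  have "((\<lambda>x. F (x, b)) has_derivative (\<lambda>u. DF (u, 0))) (at a)" .
  moreover have "((\<lambda>x. (a, x)) has_derivative (\<lambda>v. (0, v))) (at b)"
    by (intro derivative_eq_intros) auto
  from has_derivative_compose[OF this F']
  have "((\<lambda>x. F (a, x)) has_derivative (\<lambda>v. DF (0, v))) (at b)" .
  moreover have "DF (u, v) = DF (u, 0) + DF (0, v)"
    using linear_add[OF has_derivative_linear[OF F'], of "(u, 0)" "(0, v)"] by simp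
  ultimately show ?thesis
    unfolding DF_def by (simp add: frechet_derivative_at[symmetric])
qed

lemma frechet_derivative_partial2:
  assumes "F differentiable at (a, b)"
  shows "frechet_derivative (\<lambda>x. F (a, x)) (at b) v = frechet_derivative F (at (a, b)) (0, v)"
proof -
  have "frechet_derivative (\<lambda>x. F (x, b)) (at a) 0 = 0"
    using linear_0 linear_frechet_derivative differentiable_partial1[OF assms] by blast
  then show ?thesis by (simp add: frechet_derivative_Pair_split[OF assms])
qed

lemma frechet_derivative_Pair_split4:
  assumes F: "F differentiable at (a, b, c, d)"
  shows "frechet_derivative F (at (a, b, c, d)) (u1, u2, u3, u4)
       = frechet_derivative (\<lambda>x. F (x, b, c, d)) (at a) u1
       + frechet_derivative (\<lambda>x. F (a, x, c, d)) (at b) u2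
       + frechet_derivative (\<lambda>x. F (a, b, x, d)) (at c) u3
       + frechet_derivative (\<lambda>x. F (a, b, c, x)) (at d) u4"
proof -
  have Fa: "(\<lambda>x. F (a, x)) differentiable at (b, c, d)"
    using differentiable_partial2[OF F] .
  have Fab: "(\<lambda>x. F (a, b, x)) differentiable at (c, d)"
    using differentiable_partial2[OF Fa] .
  show ?thesis
    unfolding frechet_derivative_Pair_split[OF F] frechet_derivative_Pair_split[OF Fa]
      frechet_derivative_Pair_split[OF Fab]
    by (simp only: add.assoc)
qed

lemma frechet_derivative_along_constant_curve:
  assumes "F differentiable at (c t)" and "(c has_vector_derivative w) (at t)"
    and "\<And>s. F (c s) = K"
  shows "frechet_derivative F (at (c t)) w = 0"
proof -
  have "((\<lambda>s. F (c s)) has_derivative (\<lambda>r. frechet_derivative F (at (c t)) (r *\<^sub>R w))) (at t)"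
    using has_derivative_compose[OF assms(2)[unfolded has_vector_derivative_def]]
      assms(1) frechet_derivative_works by blast
  then have "((\<lambda>s. K) has_derivative (\<lambda>r. frechet_derivative F (at (c t)) (r *\<^sub>R w))) (at t)"
    by (simp add: assms(3))
  from has_derivative_unique[OF this has_derivative_const]
  show ?thesis by (metis scaleR_one)
qed

lemma linear_surj_of_invariant_quadratic:
  fixes L :: "'a::euclidean_space \<Rightarrow> 'a" and A Q :: "'a \<Rightarrow> real"
  assumes L: "linear L" and invariant: "\<And>v. A (L v) = A v"
    and second_difference: "\<And>v. A v + A (- v) - 2 * A 0 = Q v"
    and nondegenerate: "\<And>v. v \<noteq> 0 \<Longrightarrow> Q v \<noteq> 0"
  shows "surj L"
proof -
  have "v = 0" if "L v = 0" for v
  proof -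
    have "Q v = A (L v) + A (L (- v)) - 2 * A (L 0)"
      by (simp add: invariant second_difference)
    also have "\<dots> = 0" using that linear_neg[OF L] linear_0[OF L] by simp
    finally show ?thesis using nondegenerate by blast
  qed
  then show ?thesis
    using linear_injective_0[OF L] linear_injective_imp_surjective[OF L] by blast
qed

lemma differentiable_LE:
  assumes f: "smooth_map f" and rho: "smooth_map rho" and g: "smooth_map g"
    and Y: "Y differentiable at x" and W: "W differentiable at x" and u: "u differentiable at x"
  shows "(\<lambda>x. LE f rho g (Y x) (W x) (u x)) differentiable at x"
proof -
  have f': "(\<lambda>x. f (fst (Y x), fst (W x))) differentiable at x"
    by (intro differentiable_compose[OF smooth_map_differentiable[OF f]] differentiable_Pair
        differentiable_fst Y W)
  have rho': "(\<lambda>x. rho (fst (Y x))) differentiable at x"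
    by (intro differentiable_compose[OF smooth_map_differentiable[OF rho]] differentiable_fst Y)
  have g': "(\<lambda>x. g (fst (Y x))) differentiable at x"
    by (intro differentiable_compose[OF smooth_map_differentiable[OF g]] differentiable_fst Y)
  show ?thesis
    unfolding LE_def
    by (intro differentiable_diff differentiable_add differentiable_inner differentiable_mult
        differentiable_matrix_vector_mult f' rho' g' differentiable_fst differentiable_snd Y W u
        differentiable_const)
qed

lemma differentiable_Ld:
  assumes "smooth_map f" and "smooth_map rho" and "smooth_map g"
    and "a differentiable at x" and "b differentiable at x"
    and "c differentiable at x" and "d differentiable at x"
  shows "(\<lambda>x. Ld f rho g \<alpha> \<gamma> (a x) (b x) (c x) (d x) h) differentiable at x"
  unfolding Ld_def ybar_def Delta_def
  by (intro differentiable_diff differentiable_add differentiable_mult differentiable_const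
      differentiable_LE[OF assms(1-3)] differentiable_scaleR assms(4-))

lemma LE_second_difference:
  "LE f rho g y w v + LE f rho g y w (- v) - 2 * LE f rho g y w 0 = - (v \<bullet> (g (fst y) *v v))"
  by (simp add: LE_def linear_neg[OF matrix_vector_mul_linear] inner_add_right inner_minus_right
      algebra_simps)

lemma Ld_second_difference1:
  "Ld f rho g \<alpha> \<gamma> z0 z1 v w h + Ld f rho g \<alpha> \<gamma> z0 z1 (- v) w h - 2 * Ld f rho g \<alpha> \<gamma> z0 z1 0 w h
     = - (h * \<alpha>) * (v \<bullet> (g (fst (ybar \<gamma> z0 z1)) *v v))"
proof -
  let ?L = "LE f rho g (ybar \<gamma> z0 z1) (Delta h z0 z1)"
  have "Ld f rho g \<alpha> \<gamma> z0 z1 v w h + Ld f rho g \<alpha> \<gamma> z0 z1 (- v) w h - 2 * Ld f rho g \<alpha> \<gamma> z0 z1 0 w h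
      = h * \<alpha> * (?L v + ?L (- v) - 2 * ?L 0)"
    unfolding Ld_def by (simp only: algebra_simps)
  also have "\<dots> = - (h * \<alpha>) * (v \<bullet> (g (fst (ybar \<gamma> z0 z1)) *v v))"
    by (simp add: LE_second_difference)
  finally show ?thesis .
qed

lemma Ld_second_difference2:
  "Ld f rho g \<alpha> \<gamma> z0 z1 w v h + Ld f rho g \<alpha> \<gamma> z0 z1 w (- v) h - 2 * Ld f rho g \<alpha> \<gamma> z0 z1 w 0 h
     = - (h * (1 - \<alpha>)) * (v \<bullet> (g (fst (ybar (1 - \<gamma>) z0 z1)) *v v))"
proof -
  let ?L = "LE f rho g (ybar (1 - \<gamma>) z0 z1) (Delta h z0 z1)"
  have "Ld f rho g \<alpha> \<gamma> z0 z1 w v h + Ld f rho g \<alpha> \<gamma> z0 z1 w (- v) h - 2 * Ld f rho g \<alpha> \<gamma> z0 z1 w 0 h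
      = h * (1 - \<alpha>) * (?L v + ?L (- v) - 2 * ?L 0)"
    unfolding Ld_def by (simp only: algebra_simps)
  also have "\<dots> = - (h * (1 - \<alpha>)) * (v \<bullet> (g (fst (ybar (1 - \<gamma>) z0 z1)) *v v))"
    by (simp add: LE_second_difference)
  finally show ?thesis .
qed

lemma Ld_cong_control1:
  assumes "h * \<alpha> = 0 \<or> w = w'"
  shows "Ld f rho g \<alpha> \<gamma> z0 z1 w v h = Ld f rho g \<alpha> \<gamma> z0 z1 w' v h"
  using assms unfolding Ld_def distrib_left mult.assoc[symmetric] by auto

lemma Ld_cong_control2:
  assumes "h * (1 - \<alpha>) = 0 \<or> w = w'"
  shows "Ld f rho g \<alpha> \<gamma> z0 z1 v w h = Ld f rho g \<alpha> \<gamma> z0 z1 v w' h"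
  using assms unfolding Ld_def distrib_left mult.assoc[symmetric] by auto

lemma surj_control_map1:
  assumes "\<And>q u. u \<noteq> 0 \<Longrightarrow> u \<bullet> (g q *v u) > 0" and "h * \<alpha> \<noteq> 0"
    and invariant: "\<And>v. Ld f rho g \<alpha> \<gamma> z0 z1 (P *v v) 0 h = Ld f rho g \<alpha> \<gamma> z0 z1 v 0 h"
  shows "surj ((*v) P)"
  by (rule linear_surj_of_invariant_quadratic[OF matrix_vector_mul_linear invariant
        Ld_second_difference1])
    (use assms in \<open>simp, metis less_irrefl\<close>)

lemma surj_control_map2:
  assumes "\<And>q u. u \<noteq> 0 \<Longrightarrow> u \<bullet> (g q *v u) > 0" and "h * (1 - \<alpha>) \<noteq> 0"
    and invariant: "\<And>v. Ld f rho g \<alpha> \<gamma> z0 z1 0 (P *v v) h = Ld f rho g \<alpha> \<gamma> z0 z1 0 v h"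
  shows "surj ((*v) P)"
  by (rule linear_surj_of_invariant_quadratic[OF matrix_vector_mul_linear invariant
        Ld_second_difference2])
    (use assms in \<open>simp, metis less_irrefl\<close>)

lemma obtain_control_preimages:
  assumes g_posdef: "\<And>q u. u \<noteq> 0 \<Longrightarrow> u \<bullet> (g q *v u) > 0"
    and invariant: "\<And>V1 V2. Ld f rho g \<alpha> \<gamma> z0 z1 (P1 *v V1) (P2 *v V2) h
                          = Ld f rho g \<alpha> \<gamma> z0 z1 V1 V2 h"
  obtains V1 V2 where "h * \<alpha> = 0 \<or> P1 *v V1 = U1" and "h * (1 - \<alpha>) = 0 \<or> P2 *v V2 = U2"
proof -
  have "h * \<alpha> \<noteq> 0 \<Longrightarrow> surj ((*v) P1)"
    by (rule surj_control_map1[OF g_posdef]) (use invariant[of _ 0] in simp_all)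
  moreover have "h * (1 - \<alpha>) \<noteq> 0 \<Longrightarrow> surj ((*v) P2)"
    by (rule surj_control_map2[OF g_posdef]) (use invariant[of 0] in simp_all)
  ultimately show ?thesis
    using that by (metis surjD)
qed

lemma frechet_derivative_Ld_control1_eq_0:
  assumes "h * \<alpha> = 0 \<or> w = u" and "h * (1 - \<alpha>) = 0 \<or> w' = u'"
    and stationary: "frechet_derivative (\<lambda>W. Ld f rho g \<alpha> \<gamma> z0 z1 W u' h) (at u) = (\<lambda>v. 0)"
  shows "frechet_derivative (\<lambda>W. Ld f rho g \<alpha> \<gamma> z0 z1 W w' h) (at w) = (\<lambda>v. 0)"
proof -
  have "(\<lambda>W. Ld f rho g \<alpha> \<gamma> z0 z1 W w' h) = (\<lambda>W. Ld f rho g \<alpha> \<gamma> z0 z1 W u' h)"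
    by (intro ext Ld_cong_control2[OF assms(2)])
  moreover have "(\<lambda>W. Ld f rho g \<alpha> \<gamma> z0 z1 W u' h) = (\<lambda>W. Ld f rho g \<alpha> \<gamma> z0 z1 u u' h)"
    if "h * \<alpha> = 0"
    using Ld_cong_control1 that by blast
  ultimately show ?thesis
    using assms(1) stationary by auto
qed

lemma frechet_derivative_Ld_control2_eq_0:
  assumes "h * \<alpha> = 0 \<or> w = u" and "h * (1 - \<alpha>) = 0 \<or> w' = u'"
    and stationary: "frechet_derivative (\<lambda>W. Ld f rho g \<alpha> \<gamma> z0 z1 u W h) (at u') = (\<lambda>v. 0)"
  shows "frechet_derivative (\<lambda>W. Ld f rho g \<alpha> \<gamma> z0 z1 w W h) (at w') = (\<lambda>v. 0)"
proof -
  have "(\<lambda>W. Ld f rho g \<alpha> \<gamma> z0 z1 w W h) = (\<lambda>W. Ld f rho g \<alpha> \<gamma> z0 z1 u W h)"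
    by (intro ext Ld_cong_control1[OF assms(1)])
  moreover have "(\<lambda>W. Ld f rho g \<alpha> \<gamma> z0 z1 u W h) = (\<lambda>W. Ld f rho g \<alpha> \<gamma> z0 z1 u u' h)"
    if "h * (1 - \<alpha>) = 0"
    using Ld_cong_control2 that by blast
  ultimately show ?thesis
    using assms(2) stationary by auto
qed

lemma cot_lift_zero:
  assumes "\<And>q. phi 0 q = q" shows "cot_lift phi 0 y = y"
proof -
  have "phi 0 = id" using assms by (simp add: fun_eq_iff)
  then show ?thesis
    by (simp add: cot_lift_def frechet_derivative_id matrix_id_mat_1 transpose_mat assms)
qed

lemma differentiable_cot_lift:
  fixes phi :: "real \<Rightarrow> real^'n \<Rightarrow> real^'n"
  assumes phi: "smooth_map (\<lambda>z::real \<times> (real^'n). phi (fst z) (snd z))"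
  shows "(\<lambda>s. cot_lift phi s y) differentiable at t"
proof -
  define P where "P = (\<lambda>z::real \<times> (real^'n). phi (fst z) (snd z))"
  have P: "P differentiable at z" for z
    unfolding P_def using smooth_map_differentiable[OF phi] .
  have orbit: "(\<lambda>s. phi s (fst y)) differentiable at t"
    using differentiable_curry_orbit[OF phi] .
  have "(\<lambda>s. transpose (matrix (frechet_derivative (phi (- s)) (at (phi s (fst y))))) *v snd y)
          differentiable at t"
  proof (rule differentiable_vec_componentwise)
    fix i
    have "(\<lambda>s. frechet_derivative P (at (- s, phi s (fst y))) (0, axis i 1)) differentiable at t"
      using differentiable_compose[of "\<lambda>z. frechet_derivative P (at z) (0, axis i 1)"
          "\<lambda>s. (- s, phi s (fst y))",
          OF smooth_map_frechet_derivative_differentiable[OF phi[folded P_def]]]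
      by (simp add: differentiable_Pair differentiable_minus differentiable_ident orbit)
    moreover have "frechet_derivative (phi r) (at x) v = frechet_derivative P (at (r, x)) (0, v)"
      for r x v
      using frechet_derivative_partial2[OF P, of r x v] by (simp add: P_def)
    ultimately show "(\<lambda>s. (transpose (matrix (frechet_derivative (phi (- s)) (at (phi s (fst y)))))
        *v snd y) $ i) differentiable at t"
      by (simp add: vector_matrix_mult_matrix_nth differentiable_inner differentiable_const)
  qed
  then show ?thesis
    unfolding cot_lift_def by (intro differentiable_Pair orbit)
qed

lemma noether_conservation_step:
  fixes f :: "(real^'n) \<times> (real^'n) \<Rightarrow> real^'n"
    and rho :: "real^'n \<Rightarrow> real^'m^'n"
    and g :: "real^'n \<Rightarrow> real^'m^'m"
    and phi :: "real \<Rightarrow> real^'n \<Rightarrow> real^'n"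
    and Psi :: "real \<Rightarrow> real^'n \<Rightarrow> real^'m^'m"
  assumes f: "smooth_map f" and rho: "smooth_map rho" and g: "smooth_map g"
    and g_posdef: "\<And>q u. u \<noteq> 0 \<Longrightarrow> u \<bullet> (g q *v u) > 0"
    and phi_smooth: "smooth_map (\<lambda>z::real \<times> (real^'n). phi (fst z) (snd z))"
    and phi_zero: "\<And>q. phi 0 q = q"
    and Psi_smooth: "smooth_map (\<lambda>z::real \<times> (real^'n). Psi (fst z) (snd z))"
    and invariant: "\<And>s V1 V2.
          Ld f rho g \<alpha> \<gamma> (cot_lift phi s y0) (cot_lift phi s y1)
             (Psi s (ybar \<beta> (fst y0) (fst y1)) *v V1)
             (Psi s (ybar (1 - \<beta>) (fst y0) (fst y1)) *v V2) h
          = Ld f rho g \<alpha> \<gamma> y0 y1 V1 V2 h"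
    and min1: "frechet_derivative (\<lambda>W. Ld f rho g \<alpha> \<gamma> y0 y1 W U2 h) (at U1) = (\<lambda>v. 0)"
    and min2: "frechet_derivative (\<lambda>W. Ld f rho g \<alpha> \<gamma> y0 y1 U1 W h) (at U2) = (\<lambda>v. 0)"
  shows "Id_noether phi y0 (pminus f rho g \<alpha> \<gamma> y0 y1 U1 U2 h)
       = Id_noether phi y1 (pplus f rho g \<alpha> \<gamma> y0 y1 U1 U2 h)"
proof -
  define q1 where "q1 = ybar \<beta> (fst y0) (fst y1)"
  define q2 where "q2 = ybar (1 - \<beta>) (fst y0) (fst y1)"
  have invariant0: "Ld f rho g \<alpha> \<gamma> y0 y1 (Psi 0 q1 *v V1) (Psi 0 q2 *v V2) h
      = Ld f rho g \<alpha> \<gamma> y0 y1 V1 V2 h" for V1 V2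
    using invariant[of 0 V1 V2] by (simp add: cot_lift_zero[of phi, OF phi_zero] q1_def q2_def)
  obtain V1 V2 where V1: "h * \<alpha> = 0 \<or> Psi 0 q1 *v V1 = U1"
    and V2: "h * (1 - \<alpha>) = 0 \<or> Psi 0 q2 *v V2 = U2"
    using obtain_control_preimages[OF g_posdef invariant0] .
  define W1 where "W1 = Psi 0 q1 *v V1"
  define W2 where "W2 = Psi 0 q2 *v V2"
  have W1: "h * \<alpha> = 0 \<or> W1 = U1" and W2: "h * (1 - \<alpha>) = 0 \<or> W2 = U2"
    using V1 V2 by (auto simp: W1_def W2_def)
  have Ld_W: "Ld f rho g \<alpha> \<gamma> z0 z1 W1 W2 h = Ld f rho g \<alpha> \<gamma> z0 z1 U1 U2 h" for z0 z1
    using Ld_cong_control1[OF W1] Ld_cong_control2[OF W2] by metis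
  define F where
    "F p = Ld f rho g \<alpha> \<gamma> (fst p) (fst (snd p)) (fst (snd (snd p))) (snd (snd (snd p))) h"
    for p :: "'n cot \<times> 'n cot \<times> (real^'m) \<times> (real^'m)"
  have F: "F differentiable at p" for p
    unfolding F_def
    by (intro differentiable_Ld[OF f rho g] differentiable_fst differentiable_snd differentiable_ident)
  define curve where
    "curve s = (cot_lift phi s y0, cot_lift phi s y1, Psi s q1 *v V1, Psi s q2 *v V2)" for s
  define w1 where "w1 = vector_derivative (\<lambda>s. Psi s q1 *v V1) (at 0)"
  define w2 where "w2 = vector_derivative (\<lambda>s. Psi s q2 *v V2) (at 0)"
  have control_curve: "(\<lambda>s. Psi s q *v V) differentiable at 0" for q V
    by (intro differentiable_matrix_vector_mult differentiable_curry_orbit[OF Psi_smooth]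
        differentiable_const)
  have "(curve has_vector_derivative (xi_gen phi y0, xi_gen phi y1, w1, w2)) (at 0)"
    unfolding curve_def xi_gen_def w1_def w2_def
    by (intro has_vector_derivative_Pair vector_derivative_works[THEN iffD1]
        differentiable_cot_lift[OF phi_smooth] control_curve)
  moreover have "curve 0 = (y0, y1, W1, W2)"
    by (simp add: curve_def cot_lift_zero[of phi, OF phi_zero] W1_def W2_def)
  moreover have "F (curve s) = Ld f rho g \<alpha> \<gamma> y0 y1 V1 V2 h" for s
    by (simp add: F_def curve_def invariant[folded q1_def q2_def])
  ultimately have
    "frechet_derivative F (at (y0, y1, W1, W2)) (xi_gen phi y0, xi_gen phi y1, w1, w2) = 0"
    using frechet_derivative_along_constant_curve[OF F] by metis
  moreover have "frechet_derivative (\<lambda>W. Ld f rho g \<alpha> \<gamma> y0 y1 W W2 h) (at W1) = (\<lambda>v. 0)"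
    using frechet_derivative_Ld_control1_eq_0[OF W1 W2 min1] .
  moreover have "frechet_derivative (\<lambda>W. Ld f rho g \<alpha> \<gamma> y0 y1 W1 W h) (at W2) = (\<lambda>v. 0)"
    using frechet_derivative_Ld_control2_eq_0[OF W1 W2 min2] .
  ultimately show ?thesis
    by (simp add: frechet_derivative_Pair_split4[OF F] F_def Ld_W Id_noether_def pminus_def
        pplus_def)
qed

theorem mainTheorem12:
  fixes f :: "(real^'n) \<times> (real^'n) \<Rightarrow> real^'n"
    and rho :: "real^'n \<Rightarrow> real^'m^'n"
    and g :: "real^'n \<Rightarrow> real^'m^'m"
    and phi :: "real \<Rightarrow> real^'n \<Rightarrow> real^'n"
    and Psi :: "real \<Rightarrow> real^'n \<Rightarrow> real^'m^'m"
    and \<alpha> \<beta> \<gamma> h :: real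
    and N :: nat
    and y :: "nat \<Rightarrow> 'n cot"
    and U1 U2 :: "nat \<Rightarrow> real^'m"
  assumes f_smooth: "smooth_map f"
    and rho_smooth: "smooth_map rho"
    and g_smooth: "smooth_map g"
    and g_sym: "\<And>q. transpose (g q) = g q"
    and g_posdef: "\<And>q u. u \<noteq> 0 \<Longrightarrow> u \<bullet> (g q *v u) > 0"
    and \<alpha>: "\<alpha> \<in> {0..1}" and \<beta>: "\<beta> \<in> {0..1}" and \<gamma>: "\<gamma> \<in> {0..1}"
    \<comment> \<open>one-parameter group of transformations s |-> Phi_{g_s}, smooth in (s,q)\<close>
    and phi_smooth: "smooth_map (\<lambda>z::real \<times> (real^'n). phi (fst z) (snd z))"
    and phi_zero: "\<And>q. phi 0 q = q"
    and phi_add: "\<And>s t q. phi (s + t) q = phi s (phi t q)"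
    \<comment> \<open>action on controls\<close>
    and Psi_smooth: "smooth_map (\<lambda>z::real \<times> (real^'n). Psi (fst z) (snd z))"
    and Psi_rel: "\<And>s q u. rho (phi s q) *v (Psi s q *v u)
                     = frechet_derivative (phi s) (at q) (rho q *v u)"
    \<comment> \<open>invariance of the approximate discrete Lagrangian\<close>
    and invariant: "\<And>s y0 y1 V1 V2 k.
          Ld f rho g \<alpha> \<gamma> (cot_lift phi s y0) (cot_lift phi s y1)
             (Psi s (ybar \<beta> (fst y0) (fst y1)) *v V1)
             (Psi s (ybar (1 - \<beta>) (fst y0) (fst y1)) *v V2) k
          = Ld f rho g \<alpha> \<gamma> y0 y1 V1 V2 k"
    \<comment> \<open>discrete Euler--Lagrange equations\<close>
    and DEL: "\<And>k. 1 \<le> k \<Longrightarrow> k < N \<Longrightarrow>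
          (\<lambda>v. frechet_derivative (\<lambda>z. Ld f rho g \<alpha> \<gamma> (y (k - 1)) z (U1 (k - 1)) (U2 (k - 1)) h) (at (y k)) v
             + frechet_derivative (\<lambda>z. Ld f rho g \<alpha> \<gamma> z (y (k + 1)) (U1 k) (U2 k) h) (at (y k)) v)
          = (\<lambda>v. 0)"
    \<comment> \<open>minimisation conditions\<close>
    and min1: "\<And>k. k < N \<Longrightarrow>
          frechet_derivative (\<lambda>W. Ld f rho g \<alpha> \<gamma> (y k) (y (k + 1)) W (U2 k) h) (at (U1 k)) = (\<lambda>v. 0)"
    and min2: "\<And>k. k < N \<Longrightarrow>
          frechet_derivative (\<lambda>W. Ld f rho g \<alpha> \<gamma> (y k) (y (k + 1)) (U1 k) W h) (at (U2 k)) = (\<lambda>v. 0)"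
  shows "(\<forall>k < N.
            Id_noether phi (y k) (pminus f rho g \<alpha> \<gamma> (y k) (y (k + 1)) (U1 k) (U2 k) h)
          = Id_noether phi (y (k + 1)) (pplus f rho g \<alpha> \<gamma> (y k) (y (k + 1)) (U1 k) (U2 k) h))
       \<and> (\<forall>k. 1 \<le> k \<and> k < N \<longrightarrow>
            pminus f rho g \<alpha> \<gamma> (y k) (y (k + 1)) (U1 k) (U2 k) h
          = pplus f rho g \<alpha> \<gamma> (y (k - 1)) (y k) (U1 (k - 1)) (U2 (k - 1)) h)
       \<and> (\<forall>k < N.
            Id_noether phi (y k) (pminus f rho g \<alpha> \<gamma> (y k) (y (k + 1)) (U1 k) (U2 k) h)
          = Id_noether phi (y 0) (pminus f rho g \<alpha> \<gamma> (y 0) (y 1) (U1 0) (U2 0) h))"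
proof -
  have step: "Id_noether phi (y k) (pminus f rho g \<alpha> \<gamma> (y k) (y (k + 1)) (U1 k) (U2 k) h)
      = Id_noether phi (y (k + 1)) (pplus f rho g \<alpha> \<gamma> (y k) (y (k + 1)) (U1 k) (U2 k) h)"
    if "k < N" for k
    by (rule noether_conservation_step[OF f_smooth rho_smooth g_smooth g_posdef phi_smooth phi_zero
          Psi_smooth invariant min1[OF that] min2[OF that]])
  have momentum_match: "pminus f rho g \<alpha> \<gamma> (y k) (y (k + 1)) (U1 k) (U2 k) h
      = pplus f rho g \<alpha> \<gamma> (y (k - 1)) (y k) (U1 (k - 1)) (U2 (k - 1)) h"
    if "1 \<le> k" "k < N" for k
    using DEL[OF that] unfolding pminus_def pplus_def by (simp add: fun_eq_iff add_eq_0_iff)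
  have conserved: "Id_noether phi (y k) (pminus f rho g \<alpha> \<gamma> (y k) (y (k + 1)) (U1 k) (U2 k) h)
      = Id_noether phi (y 0) (pminus f rho g \<alpha> \<gamma> (y 0) (y 1) (U1 0) (U2 0) h)"
    if "k < N" for k
    using that
  proof (induction k)
    case (Suc k)
    then show ?case using step[of k] momentum_match[of "Suc k"] by simp
  qed simp
  show ?thesis using step momentum_match conserved by blast
qed

end
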